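(* Let $\alpha,\delta>0$ and let $\{x_j:j\in\mathbb{N}\}$ be a complete interpolating sequence for $L^2(S_\delta)$, where $S_\delta=[-\delta,\delta]^2$. Then for every $f\in PW_{S_\delta}$ the Poisson interpolant satisfies $I_\alpha[f]\in L^2(\mathbb{R}^2)\cap C(\mathbb{R}^2)$.
   Context: Fourier transform on $\mathbb{R}^2$: $\hat g(\xi)=\mathcal{F}[g](\xi)=(2\pi)^{-1}\int g(x)e^{-i\langle\xi,x\rangle}dx$, extended to $L^2(\mathbb{R}^2)$. For $S\subset\mathbb{R}^2$ of positive measure, $PW_S=\{f\in L^2(\mathbb{R}^2):\hat f=0 \text{ a.e. outside } S\}$. A sequence $\{x_j:j\in\mathbb{N}\}\subset\mathbb{R}^2$ is a complete interpolating sequence for $S_\delta$ if $\{e^{i\langle\cdot,x_j\rangle}\}$ is a Riesz basis of $L^2(S_\delta)$. Poisson kernel: $g_\alpha(x)=(2\pi)^{-1}\alpha(\alpha^2+|x|^2)^{-3/2}$. For $f\in PW_{S_\delta}$ one has $\{f(x_j)\}\in\ell^2$, and there is a (unique) sequence $\{a_j\}\in\ell^2$ such that $I_\alpha[f](x)=\sum_{j=1}^\infty a_jg_\alpha(x-x_j)$ satisfies $I_\alpha[f](x_k)=f(x_k)$ for all $k\in\mathbb{N}$; $I_\alpha[f]$ is called the Poisson interpolant of $f$. *)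

theory Defs
  imports "HOL-Analysis.Analysis"
begin

definition sq_int :: "(real^2 \<Rightarrow> complex) \<Rightarrow> bool" where
  "sq_int f \<longleftrightarrow> f \<in> borel_measurable lborel \<and> integrable lborel (\<lambda>x. (cmod (f x))^2)"

definition sq_int_on :: "(real^2) set \<Rightarrow> (real^2 \<Rightarrow> complex) \<Rightarrow> bool" where
  "sq_int_on S g \<longleftrightarrow> set_borel_measurable lborel S g \<and> set_integrable lborel S (\<lambda>x. (cmod (g x))^2)"

definition L2_norm2_on :: "(real^2) set \<Rightarrow> (real^2 \<Rightarrow> complex) \<Rightarrow> real" where
  "L2_norm2_on S g = (LINT x:S|lborel. (cmod (g x))^2)"

definition fourier :: "(real^2 \<Rightarrow> complex) \<Rightarrow> real^2 \<Rightarrow> complex" where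
  "fourier g \<xi> = complex_of_real (1 / (2 * pi)) *
      (LINT x|lborel. g x * exp (- \<i> * complex_of_real (\<xi> \<bullet> x)))"

text \<open>Paley--Wiener space: f in L2 whose (L2 = distributional) Fourier transform F vanishes
  a.e. outside S; F is characterised by the duality identity
  int f * hat phi = int F * phi for all phi in L1 cap L2.\<close>
definition PW :: "(real^2) set \<Rightarrow> (real^2 \<Rightarrow> complex) set" where
  "PW S = {f. sq_int f \<and>
     (\<exists>F. sq_int F \<and> (AE \<xi> in lborel. \<xi> \<notin> S \<longrightarrow> F \<xi> = 0) \<and>
        (\<forall>\<phi>. \<phi> \<in> borel_measurable lborel \<and> integrable lborel \<phi> \<and> sq_int \<phi> \<longrightarrow>
           (LINT x|lborel. f x * fourier \<phi> x) = (LINT \<xi>|lborel. F \<xi> * \<phi> \<xi>)))}"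

definition riesz_basis_L2 :: "(real^2) set \<Rightarrow> (nat \<Rightarrow> real^2 \<Rightarrow> complex) \<Rightarrow> bool" where
  "riesz_basis_L2 S e \<longleftrightarrow>
     (\<forall>j. sq_int_on S (e j)) \<and>
     (\<exists>A B. 0 < A \<and> 0 < B \<and>
        (\<forall>(c :: nat \<Rightarrow> complex) n.
            A * (\<Sum>j<n. (cmod (c j))^2) \<le> L2_norm2_on S (\<lambda>\<xi>. \<Sum>j<n. c j * e j \<xi>) \<and>
            L2_norm2_on S (\<lambda>\<xi>. \<Sum>j<n. c j * e j \<xi>) \<le> B * (\<Sum>j<n. (cmod (c j))^2))) \<and>
     (\<forall>g. sq_int_on S g \<longrightarrow>
        (\<forall>\<epsilon>>0. \<exists>(c :: nat \<Rightarrow> complex) n.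
            L2_norm2_on S (\<lambda>\<xi>. g \<xi> - (\<Sum>j<n. c j * e j \<xi>)) < \<epsilon>))"

definition complete_interpolating :: "(real^2) set \<Rightarrow> (nat \<Rightarrow> real^2) \<Rightarrow> bool" where
  "complete_interpolating S xs \<longleftrightarrow>
     riesz_basis_L2 S (\<lambda>j \<xi>. exp (\<i> * complex_of_real (\<xi> \<bullet> xs j)))"

definition square :: "real \<Rightarrow> (real^2) set" where
  "square \<delta> = cbox (\<chi> i. - \<delta>) (\<chi> i. \<delta>)"

definition poisson :: "real \<Rightarrow> real^2 \<Rightarrow> real" where
  "poisson \<alpha> x = (1 / (2 * pi)) * \<alpha> * (\<alpha>^2 + (norm x)^2) powr (- 3 / 2)"

definition poisson_sum :: "real \<Rightarrow> (nat \<Rightarrow> real^2) \<Rightarrow> (nat \<Rightarrow> complex) \<Rightarrow> real^2 \<Rightarrow> complex" where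
  "poisson_sum \<alpha> xs a x = (\<Sum>j. a j * complex_of_real (poisson \<alpha> (x - xs j)))"

end

theory Submission
  imports Defs
begin

text \<open>Write \<open>g\<^sub>j(x) = g\<^sub>\<alpha>(x - x\<^sub>j)\<close>. Since the coefficients are only square summable, the
  series \<open>\<Sum>\<^sub>j a\<^sub>j g\<^sub>j\<close> is controlled by Cauchy--Schwarz with weights \<open>g\<^sub>j(x)\<close>:
  \<open>|\<Sum>\<^sub>j a\<^sub>j g\<^sub>j(x)|\<^sup>2 \<le> (\<Sum>\<^sub>j g\<^sub>j(x)) \<cdot> \<Sum>\<^sub>j |a\<^sub>j|\<^sup>2 g\<^sub>j(x)\<close>.
  The first factor is bounded uniformly in \<open>x\<close>: the lower Riesz bound forces a complete
  interpolating sequence to be uniformly separated, and by a Harnack inequality for the Poisson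
  kernel each \<open>g\<^sub>j(x)\<close> is dominated by the average of \<open>g\<^sub>\<alpha>(\<cdot> - x)\<close> over a ball around
  \<open>x\<^sub>j\<close>, these balls being disjoint. The second factor has integral
  \<open>\<parallel>g\<^sub>\<alpha>\<parallel>\<^sub>1 \<Sum>\<^sub>j |a\<^sub>j|\<^sup>2\<close>, so the interpolant is in \<open>L\<^sup>2\<close>; the same estimate applied to tails
  gives uniform convergence and hence continuity.\<close>

lemma norm_weighted_sum_sq_le:
  fixes a :: "'i \<Rightarrow> complex" and w :: "'i \<Rightarrow> real"
  assumes "\<And>i. i \<in> A \<Longrightarrow> 0 \<le> w i"
  shows "(cmod (\<Sum>i\<in>A. a i * of_real (w i)))^2 \<le> (\<Sum>i\<in>A. (cmod (a i))^2 * w i) * (\<Sum>i\<in>A. w i)"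
proof -
  have "cmod (\<Sum>i\<in>A. a i * of_real (w i)) \<le> (\<Sum>i\<in>A. (cmod (a i) * sqrt (w i)) * sqrt (w i))"
    using norm_sum[of "\<lambda>i. a i * of_real (w i)" A] assms
    by (simp add: norm_mult mult.assoc)
  then have "(cmod (\<Sum>i\<in>A. a i * of_real (w i)))^2 \<le> (\<Sum>i\<in>A. (cmod (a i) * sqrt (w i)) * sqrt (w i))^2"
    by (intro power_mono) auto
  also have "\<dots> \<le> (\<Sum>i\<in>A. (cmod (a i) * sqrt (w i))^2) * (\<Sum>i\<in>A. (sqrt (w i))^2)"
    by (rule Cauchy_Schwarz_ineq_sum)
  also have "\<dots> = (\<Sum>i\<in>A. (cmod (a i))^2 * w i) * (\<Sum>i\<in>A. w i)"
    using assms by (simp add: power_mult_distrib)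
  finally show ?thesis .
qed

lemma sum_le_of_partial_sums_le:
  fixes w :: "nat \<Rightarrow> real"
  assumes "\<And>i. 0 \<le> w i" and "\<And>n. (\<Sum>i<n. w i) \<le> M" and "finite A"
  shows "(\<Sum>i\<in>A. w i) \<le> M"
proof -
  have "A \<subseteq> {..<Suc (Max A)}"
    using Max_ge[OF \<open>finite A\<close>] by (simp add: subset_iff less_Suc_eq_le)
  then have "(\<Sum>i\<in>A. w i) \<le> (\<Sum>i<Suc (Max A). w i)"
    using assms(1) by (intro sum_mono2) auto
  also have "\<dots> \<le> M" by (rule assms(2))
  finally show ?thesis .
qed

lemma norm_weighted_sum_sq_le_bound:
  fixes g :: "nat \<Rightarrow> 'a \<Rightarrow> real" and a :: "nat \<Rightarrow> complex"
  assumes "\<And>j x. 0 \<le> g j x" and "\<And>n x. (\<Sum>j<n. g j x) \<le> M" and "finite A"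
  shows "(cmod (\<Sum>j\<in>A. a j * of_real (g j x)))^2 \<le> M * (\<Sum>j\<in>A. (cmod (a j))^2 * g j x)"
proof -
  have "(cmod (\<Sum>j\<in>A. a j * of_real (g j x)))^2 \<le> (\<Sum>j\<in>A. (cmod (a j))^2 * g j x) * (\<Sum>j\<in>A. g j x)"
    using assms(1) by (rule norm_weighted_sum_sq_le)
  also have "\<dots> \<le> (\<Sum>j\<in>A. (cmod (a j))^2 * g j x) * M"
    using sum_le_of_partial_sums_le[OF assms] assms(1) by (simp add: mult_left_mono sum_nonneg)
  finally show ?thesis by (simp add: mult.commute)
qed

lemma uniform_limit_weighted_series:
  fixes g :: "nat \<Rightarrow> 'a \<Rightarrow> real" and a :: "nat \<Rightarrow> complex"
  assumes g_nonneg: "\<And>j x. 0 \<le> g j x" and g_sum: "\<And>n x. (\<Sum>j<n. g j x) \<le> M"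
    and a: "summable (\<lambda>j. (cmod (a j))^2)"
  shows "uniform_limit UNIV (\<lambda>n x. \<Sum>j<n. a j * of_real (g j x))
           (\<lambda>x. \<Sum>j. a j * of_real (g j x)) sequentially"
proof -
  define s where "s n x = (\<Sum>j<n. a j * of_real (g j x))" for n x
  have g_le: "g j x \<le> M" for j x
    using sum_le_of_partial_sums_le[OF g_nonneg g_sum, of "{j}"] by simp
  have "0 \<le> M"
    using order_trans[OF g_nonneg g_le] .
  have "uniformly_Cauchy_on UNIV s"
  proof (rule uniformly_Cauchy_onI')
    fix e :: real assume "e > 0"
    then have "0 < (e / (M + 1))^2"
      using \<open>0 \<le> M\<close> by simp
    then obtain N where N: "\<And>m n. m \<ge> N \<Longrightarrow> norm (\<Sum>j=m..<n. (cmod (a j))^2) < (e / (M + 1))^2"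
      using a unfolding summable_Cauchy by blast
    have "dist (s m x) (s n x) < e" if "m \<ge> N" and "m < n" for x m n
    proof -
      have "s n x = s m x + (\<Sum>j=m..<n. a j * of_real (g j x))"
        using \<open>m < n\<close> unfolding s_def atLeast0LessThan[symmetric]
        by (simp add: sum.atLeastLessThan_concat)
      then have "(dist (s m x) (s n x))^2 = (cmod (\<Sum>j=m..<n. a j * of_real (g j x)))^2"
        by (simp add: dist_norm norm_minus_commute)
      also have "\<dots> \<le> M * (\<Sum>j=m..<n. (cmod (a j))^2 * g j x)"
        by (rule norm_weighted_sum_sq_le_bound[OF g_nonneg g_sum]) simp
      also have "\<dots> \<le> M * (\<Sum>j=m..<n. (cmod (a j))^2 * M)"
        using \<open>0 \<le> M\<close> g_le by (intro mult_left_mono sum_mono) simp_all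
      also have "\<dots> = M^2 * (\<Sum>j=m..<n. (cmod (a j))^2)"
        by (simp add: power2_eq_square sum_distrib_left sum_distrib_right mult_ac)
      also have "\<dots> \<le> M^2 * (e / (M + 1))^2"
        using N[OF \<open>m \<ge> N\<close>, of n] by (intro mult_left_mono) simp_all
      also have "\<dots> = (M / (M + 1))^2 * e^2"
        by (simp add: power_divide)
      also have "\<dots> < 1 * e^2"
        using \<open>e > 0\<close> \<open>0 \<le> M\<close> by (intro mult_strict_right_mono) (simp_all add: power_less_one_iff)
      finally show ?thesis
        using \<open>e > 0\<close> by (simp add: power_less_imp_less_base)
    qed
    then show "\<exists>N. \<forall>x\<in>UNIV. \<forall>m\<ge>N. \<forall>n>m. dist (s m x) (s n x) < e"
      by blast
  qed
  then show ?thesis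
    unfolding s_def suminf_eq_lim
    using Cauchy_uniformly_convergent uniformly_convergent_uniform_limit_iff by blast
qed

lemma continuous_on_weighted_series:
  fixes g :: "nat \<Rightarrow> 'a::topological_space \<Rightarrow> real" and a :: "nat \<Rightarrow> complex"
  assumes "\<And>j. continuous_on UNIV (g j)"
    and "\<And>j x. 0 \<le> g j x" and "\<And>n x. (\<Sum>j<n. g j x) \<le> M"
    and "summable (\<lambda>j. (cmod (a j))^2)"
  shows "continuous_on UNIV (\<lambda>x. \<Sum>j. a j * of_real (g j x))"
proof (rule uniform_limit_theorem[OF _ uniform_limit_weighted_series[OF assms(2-4)]])
  have "continuous_on UNIV (\<lambda>x. \<Sum>j<n. a j * of_real (g j x))" for n
    using assms(1) by (intro continuous_on_sum continuous_on_mult continuous_on_const continuous_on_of_real)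
  then show "\<forall>\<^sub>F n in sequentially. continuous_on UNIV (\<lambda>x. \<Sum>j<n. a j * of_real (g j x))"
    by simp
qed simp

lemma sq_int_weighted_series:
  fixes g :: "nat \<Rightarrow> real^2 \<Rightarrow> real" and a :: "nat \<Rightarrow> complex"
  assumes g_cont: "\<And>j. continuous_on UNIV (g j)"
    and g_nonneg: "\<And>j x. 0 \<le> g j x" and g_sum: "\<And>n x. (\<Sum>j<n. g j x) \<le> M"
    and g_int: "\<And>j. integrable lborel (g j)" and g_integral: "\<And>j. integral\<^sup>L lborel (g j) \<le> I"
    and a: "summable (\<lambda>j. (cmod (a j))^2)"
  shows "sq_int (\<lambda>x. \<Sum>j. a j * of_real (g j x))"
proof -
  define F where "F x = (\<Sum>j. a j * of_real (g j x))" for x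
  define P where "P x = (\<Sum>j. (cmod (a j))^2 * g j x)" for x
  have g_le: "g j x \<le> M" for j x
    using sum_le_of_partial_sums_le[OF g_nonneg g_sum, of "{j}"] by simp
  have "0 \<le> M"
    using order_trans[OF g_nonneg g_le] .
  have P_summable: "summable (\<lambda>j. (cmod (a j))^2 * g j x)" for x
  proof (rule summable_comparison_test'[OF summable_mult2[OF a, of M]])
    show "norm ((cmod (a j))^2 * g j x) \<le> (cmod (a j))^2 * M" for j
      using g_nonneg[of j x] g_le[of j x] by (simp add: mult_left_mono)
  qed
  have P_int: "integrable lborel P"
    unfolding P_def
  proof (rule integrable_suminf)
    show "integrable lborel (\<lambda>x. (cmod (a j))^2 * g j x)" for j
      using g_int by simp
    show "AE x in lborel. summable (\<lambda>j. norm ((cmod (a j))^2 * g j x))"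
      using P_summable g_nonneg by (simp add: abs_mult)
    show "summable (\<lambda>j. LINT x|lborel. norm ((cmod (a j))^2 * g j x))"
    proof (rule summable_comparison_test'[OF summable_mult2[OF a, of I]])
      fix j
      have "(LINT x|lborel. norm ((cmod (a j))^2 * g j x)) = (cmod (a j))^2 * integral\<^sup>L lborel (g j)"
        using g_nonneg by (simp add: abs_mult)
      moreover have "0 \<le> integral\<^sup>L lborel (g j)"
        using g_nonneg by (simp add: integral_nonneg)
      ultimately show "norm (LINT x|lborel. norm ((cmod (a j))^2 * g j x)) \<le> (cmod (a j))^2 * I"
        using g_integral[of j] by (simp add: mult_left_mono)
    qed
  qed
  have F_bound: "(cmod (F x))^2 \<le> M * P x" for x
  proof (rule LIMSEQ_le_const2)
    show "(\<lambda>n. (cmod (\<Sum>j<n. a j * of_real (g j x)))^2) \<longlonglongrightarrow> (cmod (F x))^2"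
      unfolding F_def
      by (intro tendsto_intros tendsto_uniform_limitI[OF uniform_limit_weighted_series[OF g_nonneg g_sum a]]) simp
    have "(cmod (\<Sum>j<n. a j * of_real (g j x)))^2 \<le> M * P x" for n
    proof -
      have "(cmod (\<Sum>j<n. a j * of_real (g j x)))^2 \<le> M * (\<Sum>j<n. (cmod (a j))^2 * g j x)"
        by (rule norm_weighted_sum_sq_le_bound[OF g_nonneg g_sum]) simp
      also have "\<dots> \<le> M * P x"
        unfolding P_def using \<open>0 \<le> M\<close> g_nonneg
        by (intro mult_left_mono sum_le_suminf[OF P_summable]) simp_all
      finally show ?thesis .
    qed
    then show "\<exists>N. \<forall>n\<ge>N. (cmod (\<Sum>j<n. a j * of_real (g j x)))^2 \<le> M * P x"
      by blast
  qed
  have F_meas: "F \<in> borel_measurable lborel"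
    unfolding F_def
    using continuous_on_weighted_series[OF g_cont g_nonneg g_sum a]
    by (simp add: borel_measurable_continuous_onI)
  have "integrable lborel (\<lambda>x. (cmod (F x))^2)"
  proof (rule Bochner_Integration.integrable_bound[OF integrable_mult_right[OF P_int]])
    show "(\<lambda>x. (cmod (F x))^2) \<in> borel_measurable lborel"
      using F_meas by measurable
    show "AE x in lborel. norm ((cmod (F x))^2) \<le> norm (M * P x)"
      using F_bound by (intro AE_I2) (auto intro: order_trans[OF _ abs_ge_self])
  qed
  then show ?thesis
    using F_meas unfolding sq_int_def F_def by simp
qed

lemma
  fixes f :: "'a::euclidean_space \<Rightarrow> real"
  assumes "integrable lborel f"
  shows integrable_lborel_translate: "integrable lborel (\<lambda>z. f (c + z))"
    and integral_lborel_translate: "(LINT z|lborel. f (c + z)) = integral\<^sup>L lborel f"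
proof -
  have f_meas: "f \<in> borel_measurable borel"
    using assms by (simp add: measurable_lborel1)
  have "(+) c \<in> measurable lborel borel"
    by simp
  from integrable_distr_eq[OF this f_meas] integral_distr[OF this f_meas] assms
  show "integrable lborel (\<lambda>z. f (c + z))" "(LINT z|lborel. f (c + z)) = integral\<^sup>L lborel f"
    by (simp_all add: lborel_distr_plus)
qed

lemma sum_indicator_separated_balls_le_1:
  fixes xs :: "nat \<Rightarrow> 'a::metric_space"
  assumes sep: "\<And>i j. i \<noteq> j \<Longrightarrow> 2 * r \<le> dist (xs i) (xs j)"
  shows "(\<Sum>j\<in>A. indicator (ball (xs j) r) z) \<le> (1::real)"
proof (cases "\<exists>i\<in>A. z \<in> ball (xs i) r")
  case True
  then obtain i where i: "i \<in> A" "z \<in> ball (xs i) r"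
    by blast
  have "z \<notin> ball (xs j) r" if "j \<noteq> i" for j
    using i(2) sep[OF that] dist_triangle[of "xs j" "xs i" z] by (auto simp: dist_commute)
  then have "(\<Sum>j\<in>A. indicator (ball (xs j) r) z) \<le> (\<Sum>j\<in>A. if j = i then 1 else (0::real))"
    by (intro sum_mono) (auto simp: indicator_def)
  also have "\<dots> \<le> 1"
    by (cases "finite A") (simp_all add: i(1))
  finally show ?thesis .
qed (simp add: indicator_def)

lemma sum_translates_le:
  fixes k :: "'a::euclidean_space \<Rightarrow> real" and xs :: "nat \<Rightarrow> 'a"
  assumes k_int: "integrable lborel k" and k_nonneg: "\<And>x. 0 \<le> k x" and "r > 0"
    and sep: "\<And>i j. i \<noteq> j \<Longrightarrow> 2 * r \<le> dist (xs i) (xs j)"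
    and harnack: "\<And>y z. dist y z \<le> r \<Longrightarrow> k y \<le> K * k z"
  shows "(\<Sum>j<n. k (xs j - x)) \<le> K * integral\<^sup>L lborel k / measure lborel (ball (0::'a) r)"
proof -
  \<comment> \<open>Average the Harnack inequality over the balls \<open>B j\<close>, which are pairwise disjoint.\<close>
  define V where "V = measure lborel (ball (0::'a) r)"
  define B where "B j = ball (xs j) r" for j
  have "V > 0"
    using content_ball_pos[OF \<open>r > 0\<close>] by (simp add: V_def)
  have Kk_nonneg: "0 \<le> K * k z" for z
    using harnack[of z z] k_nonneg[of z] \<open>r > 0\<close> by simp
  have measure_B: "measure lborel (B j) = V" for j
    using content_ball_conv_unit_ball[of r "xs j"] content_ball_conv_unit_ball[of r "0::'a"] \<open>r > 0\<close>
    by (simp add: B_def V_def)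
  have kx_int: "integrable lborel (\<lambda>z. K * k (z - x))"
    using integrable_lborel_translate[OF k_int, of "- x"] by simp
  have B_int: "integrable lborel (\<lambda>z. indicator (B j) z * c)" for j and c :: real
    using emeasure_lborel_ball_finite by (intro integrable_mult_left integrable_real_indicator) (auto simp: B_def)
  have B_kx_int: "integrable lborel (\<lambda>z. indicator (B j) z * (K * k (z - x)))" for j
    using integrable_real_mult_indicator[OF _ kx_int, of "B j"] by (simp add: B_def mult.commute)
  have "(\<Sum>j<n. k (xs j - x)) * V = (\<Sum>j<n. LINT z|lborel. indicator (B j) z * k (xs j - x))"
    by (simp add: sum_distrib_left measure_B mult.commute)
  also have "\<dots> \<le> (\<Sum>j<n. LINT z|lborel. indicator (B j) z * (K * k (z - x)))"
  proof (intro sum_mono integral_mono[OF B_int B_kx_int])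
    fix j z
    have "z \<in> B j \<Longrightarrow> k (xs j - x) \<le> K * k (z - x)"
      by (intro harnack) (simp add: B_def dist_norm)
    then show "indicator (B j) z * k (xs j - x) \<le> indicator (B j) z * (K * k (z - x))"
      by (simp add: indicator_def)
  qed
  also have "\<dots> = (LINT z|lborel. (\<Sum>j<n. indicator (B j) z) * (K * k (z - x)))"
    by (simp only: sum_distrib_right Bochner_Integration.integral_sum[OF B_kx_int])
  also have "\<dots> \<le> (LINT z|lborel. K * k (z - x))"
  proof (rule integral_mono[OF _ kx_int])
    show "integrable lborel (\<lambda>z. (\<Sum>j<n. indicator (B j) z) * (K * k (z - x)))"
      unfolding sum_distrib_right by (intro Bochner_Integration.integrable_sum B_kx_int)
    show "(\<Sum>j<n. indicator (B j) z) * (K * k (z - x)) \<le> K * k (z - x)" for z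
      using sum_indicator_separated_balls_le_1[OF sep, where A = "{..<n}" and z = z] Kk_nonneg[of "z - x"]
      by (intro mult_left_le_one_le) (auto simp: B_def intro: sum_nonneg)
  qed
  also have "\<dots> = K * integral\<^sup>L lborel k"
    using integral_lborel_translate[OF k_int, of "- x"] by simp
  finally show ?thesis
    using \<open>V > 0\<close> by (simp add: V_def field_simps)
qed

lemma measure_lborel_cball:
  fixes c :: "'a::euclidean_space"
  assumes "r \<ge> 0"
  shows "measure lborel (cball c r) = r ^ DIM('a) * measure lborel (ball (0::'a) 1)"
  using content_ball_conv_unit_ball[OF assms, of c] by (simp add: content_cball_conv_ball)

lemma integrable_bounded_powr_decay:
  fixes f :: "'a::euclidean_space \<Rightarrow> real"
  assumes f_meas: "f \<in> borel_measurable lborel" and p: "real DIM('a) < p"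
    and f_bound: "\<And>x. \<bar>f x\<bar> \<le> C" and f_decay: "\<And>x. 1 < norm x \<Longrightarrow> \<bar>f x\<bar> \<le> C * norm x powr (- p)"
  shows "integrable lborel f"
proof -
  \<comment> \<open>\<open>|f|\<close> is dominated by a multiple of \<open>\<Sum>\<^sub>k 2\<^sup>-\<^sup>p\<^sup>k \<one>{|x| \<le> 2\<^sup>k}\<close>, whose integral is a
    geometric series with ratio \<open>2\<^sup>d\<^sup>i\<^sup>m\<^sup>-\<^sup>p\<close>.\<close>
  define q where "q = (2::real) powr (- p)"
  define h where "h k x = q ^ k * indicator (cball (0::'a) (2 ^ k)) x" for k x
  define V where "V = measure lborel (ball (0::'a) 1)"
  have "p > 0"
    using p by (simp add: DIM_positive order.strict_trans2)
  then have q: "0 < q" "q < 1"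
    unfolding q_def by (auto intro: powr_less_one)
  have h_int: "integrable lborel (h k)" for k
    unfolding h_def using emeasure_lborel_cball_finite
    by (intro integrable_mult_right integrable_real_indicator) auto
  have h_nonneg: "0 \<le> h k x" for k x
    using q by (simp add: h_def)
  have h_summable: "summable (\<lambda>k. h k x)" for x
    using q by (intro summable_comparison_test[OF _ summable_geometric[of q]]) (auto simp: h_def indicator_def)
  have "(LINT x|lborel. norm (h k x)) = V * (2 powr (DIM('a) - p)) ^ k" for k
  proof -
    have "(LINT x|lborel. norm (h k x)) = q ^ k * measure lborel (cball (0::'a) (2 ^ k))"
      using q emeasure_lborel_cball_finite by (simp add: h_def abs_mult)
    also have "\<dots> = V * (q * 2 ^ DIM('a)) ^ k"
      by (simp add: measure_lborel_cball V_def power_mult_distrib flip: power_mult)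
    also have "q * 2 ^ DIM('a) = 2 powr (DIM('a) - p)"
      by (simp add: q_def powr_diff powr_minus_divide powr_realpow)
    finally show ?thesis .
  qed
  moreover have "summable (\<lambda>k. V * (2 powr (DIM('a) - p)) ^ k)"
    using p by (intro summable_mult summable_geometric) (simp add: powr_less_one)
  ultimately have h_sum_int: "integrable lborel (\<lambda>x. \<Sum>k. h k x)"
    using h_int h_summable q by (intro integrable_suminf) (simp_all add: abs_of_nonneg[OF h_nonneg])
  have f_le: "\<bar>f x\<bar> \<le> C * 2 powr p * (\<Sum>k. h k x)" for x
  proof -
    have h_le: "h m x \<le> (\<Sum>k. h k x)" for m
      using sum_le_suminf[OF h_summable, of "{m}"] h_nonneg by simp
    have "C \<ge> 0"
      using f_bound[of x] by simp
    obtain n :: nat where "norm x \<le> 2 ^ n"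
      using real_arch_pow[of 2 "norm x"] by (auto intro: less_imp_le)
    show ?thesis
    proof (cases "norm x \<le> 1")
      case True
      then have "1 \<le> (\<Sum>k. h k x)"
        using h_le[of 0] by (simp add: h_def)
      moreover have "1 \<le> 2 powr p"
        using \<open>p > 0\<close> by (intro ge_one_powr_ge_zero) auto
      ultimately have "C \<le> C * 2 powr p * (\<Sum>k. h k x)"
        using \<open>C \<ge> 0\<close> by (metis mult.right_neutral mult_left_mono mult_mono' order_trans zero_le_one)
      then show ?thesis
        using f_bound[of x] by linarith
    next
      case False
      obtain m where m: "norm x \<le> 2 ^ m" "\<And>i. i < m \<Longrightarrow> \<not> norm x \<le> 2 ^ i"
        using ex_least_nat_le[where P = "\<lambda>k. norm x \<le> 2 ^ k", OF \<open>norm x \<le> 2 ^ n\<close>] False by auto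
      have "m \<ge> 1"
        using m(1) False by (cases m) auto
      then have "2 ^ (m - 1) < norm x"
        using m(2)[of "m - 1"] by simp
      then have "norm x powr (- p) \<le> (2 ^ (m - 1)) powr (- p)"
        using \<open>p > 0\<close> by (intro powr_mono2') auto
      also have "\<dots> = 2 powr p * q ^ m"
        using \<open>m \<ge> 1\<close>
        by (simp add: q_def powr_powr powr_power powr_add of_nat_diff algebra_simps flip: powr_realpow)
           (simp add: powr_diff powr_minus_divide)
      also have "\<dots> = 2 powr p * h m x"
        using m(1) by (simp add: h_def)
      finally have "\<bar>f x\<bar> \<le> C * (2 powr p * h m x)"
        using f_decay[of x] False \<open>C \<ge> 0\<close> by (meson mult_left_mono not_le order_trans)
      also have "\<dots> \<le> C * 2 powr p * (\<Sum>k. h k x)"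
        using h_le[of m] \<open>C \<ge> 0\<close> by (simp add: mult.assoc mult_left_mono)
      finally show ?thesis .
    qed
  qed
  show ?thesis
  proof (rule Bochner_Integration.integrable_bound[OF integrable_mult_right[OF h_sum_int] f_meas])
    show "AE x in lborel. norm (f x) \<le> norm (C * 2 powr p * (\<Sum>k. h k x))"
      using f_le by (intro AE_I2) (auto intro: order_trans[OF _ abs_ge_self])
  qed
qed

lemma poisson_pos: "\<alpha> > 0 \<Longrightarrow> 0 < poisson \<alpha> x"
  unfolding poisson_def by (auto intro!: mult_pos_pos add_pos_nonneg)

lemma poisson_minus: "poisson \<alpha> (- x) = poisson \<alpha> x"
  unfolding poisson_def by simp

lemma continuous_on_poisson: "\<alpha> > 0 \<Longrightarrow> continuous_on UNIV (poisson \<alpha>)"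
  unfolding poisson_def by (intro continuous_intros) (auto intro: add_pos_nonneg)

lemma poisson_le_origin:
  assumes "\<alpha> > 0"
  shows "poisson \<alpha> x \<le> poisson \<alpha> 0"
proof -
  have "(\<alpha>^2 + (norm x)^2) powr (- 3 / 2) \<le> (\<alpha>^2) powr (- 3 / 2)"
    using assms by (intro powr_mono2') auto
  then show ?thesis
    unfolding poisson_def using assms by (simp add: divide_right_mono mult_left_mono)
qed

lemma poisson_le_norm_powr:
  assumes "\<alpha> > 0" and "x \<noteq> 0"
  shows "poisson \<alpha> x \<le> \<alpha> / (2 * pi) * norm x powr (- 3)"
proof -
  have "(\<alpha>^2 + (norm x)^2) powr (- 3 / 2) \<le> ((norm x)^2) powr (- 3 / 2)"
    using assms by (intro powr_mono2') auto
  also have "\<dots> = norm x powr (- 3)"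
    by (simp add: powr_powr flip: powr_numeral)
  finally show ?thesis
    unfolding poisson_def using assms by (simp add: divide_right_mono mult_left_mono)
qed

lemma integrable_poisson:
  assumes "\<alpha> > 0"
  shows "integrable lborel (poisson \<alpha>)"
proof (rule integrable_bounded_powr_decay)
  define C where "C = max (poisson \<alpha> 0) (\<alpha> / (2 * pi))"
  show "poisson \<alpha> \<in> borel_measurable lborel"
    using continuous_on_poisson[OF assms] by (simp add: borel_measurable_continuous_onI)
  show "real DIM(real^2) < 3"
    by simp
  show "\<bar>poisson \<alpha> x\<bar> \<le> C" for x
    using poisson_pos[OF assms] poisson_le_origin[OF assms] by (simp add: C_def abs_of_pos le_max_iff_disj)
  show "\<bar>poisson \<alpha> x\<bar> \<le> C * norm x powr (- 3)" if "1 < norm x" for x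
  proof -
    have "poisson \<alpha> x \<le> \<alpha> / (2 * pi) * norm x powr (- 3)"
      using that by (intro poisson_le_norm_powr[OF assms]) auto
    also have "\<dots> \<le> C * norm x powr (- 3)"
      by (intro mult_right_mono) (auto simp: C_def)
    finally show ?thesis
      using poisson_pos[OF assms, of x] by simp
  qed
qed

lemma poisson_harnack:
  assumes "\<alpha> > 0" and "dist y z \<le> r"
  shows "poisson \<alpha> y \<le> (2 + 2 * r^2 / \<alpha>^2) powr (3 / 2) * poisson \<alpha> z"
proof -
  define u where "u = \<alpha>^2 + (norm y)^2"
  define v where "v = \<alpha>^2 + (norm z)^2"
  define c where "c = 2 + 2 * r^2 / \<alpha>^2"
  have "u > 0" "v > 0" "c > 0"
    using assms(1) by (auto simp: u_def v_def c_def intro: add_pos_nonneg)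
  have "norm z \<le> norm y + r"
    using assms(2) norm_triangle_sub[of z y] by (simp add: dist_norm norm_minus_commute)
  then have "(norm z)^2 \<le> (norm y + r)^2"
    by (intro power_mono) auto
  also have "\<dots> \<le> 2 * (norm y)^2 + 2 * r^2"
    using sum_squares_ge_zero[of "norm y - r" 0] by (simp add: power2_eq_square algebra_simps)
  finally have "(norm z)^2 \<le> 2 * (norm y)^2 + 2 * r^2" .
  moreover have "c * u = 2 * \<alpha>^2 + 2 * (norm y)^2 + 2 * r^2 + 2 * r^2 * (norm y)^2 / \<alpha>^2"
    using assms(1) by (simp add: c_def u_def field_simps)
  moreover have "0 \<le> 2 * r^2 * (norm y)^2 / \<alpha>^2"
    by simp
  ultimately have "v \<le> c * u"
    unfolding v_def by (smt (verit) zero_le_power2)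
  then have "(1 / u) powr (3 / 2) \<le> (c * (1 / v)) powr (3 / 2)"
    using \<open>u > 0\<close> \<open>v > 0\<close> by (intro powr_mono2) (auto simp: field_simps)
  then have "u powr (- 3 / 2) \<le> c powr (3 / 2) * v powr (- 3 / 2)"
    using \<open>u > 0\<close> \<open>v > 0\<close> \<open>c > 0\<close> by (simp add: powr_mult powr_minus_divide powr_divide)
  from mult_left_mono[OF this, of "1 / (2 * pi) * \<alpha>"] show ?thesis
    unfolding poisson_def using assms(1) by (simp add: u_def v_def c_def mult_ac)
qed
lemma sum_poisson_translates_bounded:
  fixes xs :: "nat \<Rightarrow> real^2"
  assumes "\<alpha> > 0" and "\<eta> > 0" and sep: "\<And>i j. i \<noteq> j \<Longrightarrow> \<eta> \<le> dist (xs i) (xs j)"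
  shows "\<exists>M. \<forall>n x. (\<Sum>j<n. poisson \<alpha> (x - xs j)) \<le> M"
proof (intro exI allI)
  fix n and x :: "real^2"
  have sep': "2 * (\<eta> / 2) \<le> dist (xs i) (xs j)" if "i \<noteq> j" for i j
    using sep[OF that] by simp
  have "(\<Sum>j<n. poisson \<alpha> (x - xs j)) = (\<Sum>j<n. poisson \<alpha> (xs j - x))"
    by (intro sum.cong refl) (metis minus_diff_eq poisson_minus)
  also have "\<dots> \<le> (2 + 2 * (\<eta> / 2)^2 / \<alpha>^2) powr (3 / 2) * integral\<^sup>L lborel (poisson \<alpha>)
                      / measure lborel (ball (0::real^2) (\<eta> / 2))"
    using \<open>\<eta> > 0\<close> poisson_pos[OF assms(1)]
    by (intro sum_translates_le[OF integrable_poisson[OF assms(1)] _ _ sep' poisson_harnack[OF assms(1)]])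
       (auto intro: less_imp_le)
  finally show "(\<Sum>j<n. poisson \<alpha> (x - xs j)) \<le> \<dots>" .
qed

lemma norm_exp_ii_diff_le:
  "cmod (exp (\<i> * complex_of_real a) - exp (\<i> * complex_of_real b)) \<le> \<bar>a - b\<bar>"
proof -
  have "exp (\<i> * complex_of_real a) - exp (\<i> * complex_of_real b)
        = exp (\<i> * complex_of_real b) * (exp (\<i> * complex_of_real (a - b)) - 1)"
    by (simp add: algebra_simps flip: exp_add)
  then have "cmod (exp (\<i> * complex_of_real a) - exp (\<i> * complex_of_real b))
             = cmod (exp (\<i> * complex_of_real (a - b)) - 1)"
    by (simp add: norm_mult)
  also have "\<dots> = 2 * \<bar>sin ((a - b) / 2)\<bar>"
    by (rule dist_exp_i_1)
  also have "\<dots> \<le> \<bar>a - b\<bar>"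
    using abs_sin_x_le_abs_x[of "(a - b) / 2"] by simp
  finally show ?thesis .
qed

lemma L2_norm2_on_le_measure:
  assumes "compact S" and "continuous_on S g" and "\<And>\<xi>. \<xi> \<in> S \<Longrightarrow> (cmod (g \<xi>))^2 \<le> B"
  shows "L2_norm2_on S g \<le> measure lborel S * B"
proof -
  have "L2_norm2_on S g = (LINT \<xi>|lborel. indicator S \<xi> *\<^sub>R (cmod (g \<xi>))^2)"
    unfolding L2_norm2_on_def set_lebesgue_integral_def ..
  also have "\<dots> \<le> (LINT \<xi>|lborel. indicator S \<xi> * B)"
  proof (rule integral_mono)
    show "integrable lborel (\<lambda>\<xi>. indicator S \<xi> *\<^sub>R (cmod (g \<xi>))^2)"
      using assms(1,2) by (intro borel_integrable_compact continuous_intros)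
    show "integrable lborel (\<lambda>\<xi>. indicator S \<xi> * B)"
      using emeasure_compact_finite[OF assms(1)] assms(1)
      by (intro integrable_mult_left integrable_real_indicator) (auto intro: borel_compact)
    show "indicator S \<xi> *\<^sub>R (cmod (g \<xi>))^2 \<le> indicator S \<xi> * B" for \<xi>
      using assms(3)[of \<xi>] by (simp add: indicator_def)
  qed
  also have "\<dots> = measure lborel S * B"
    using emeasure_compact_finite[OF assms(1)] assms(1) by simp
  finally show ?thesis .
qed

text \<open>Only the lower Riesz bound is needed: it keeps the exponentials at distinct nodes
  uniformly apart in \<open>L\<^sup>2(S)\<close>, whereas they are close when the nodes are.\<close>

lemma complete_interpolating_separated:
  assumes "compact S" and "complete_interpolating S xs"
  shows "\<exists>\<eta>>0. \<forall>j k. j \<noteq> k \<longrightarrow> \<eta> \<le> dist (xs j) (xs k)"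
proof -
  define e where "e j \<xi> = exp (\<i> * complex_of_real (\<xi> \<bullet> xs j))" for j \<xi>
  obtain A where "A > 0" and riesz_lower: "\<And>(c :: nat \<Rightarrow> complex) n.
      A * (\<Sum>j<n. (cmod (c j))^2) \<le> L2_norm2_on S (\<lambda>\<xi>. \<Sum>j<n. c j * e j \<xi>)"
    using assms(2) unfolding complete_interpolating_def riesz_basis_L2_def e_def by blast
  obtain D where D: "\<And>\<xi>. \<xi> \<in> S \<Longrightarrow> norm \<xi> \<le> D"
    using compact_imp_bounded[OF assms(1)] bounded_iff by metis
  define K where "K = measure lborel S * D^2"
  have "K \<ge> 0"
    by (simp add: K_def)
  define \<eta> where "\<eta> = sqrt (2 * A / (K + 1))"
  have "\<eta> \<le> dist (xs j) (xs k)" if "j \<noteq> k" for j k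
  proof -
    define d where "d = dist (xs j) (xs k)"
    define c where "c i = (if i = j then 1 else 0) - (if i = k then 1 else (0::complex))" for i
    define n where "n = Suc (max j k)"
    have "j < n" "k < n"
      by (simp_all add: n_def)
    have "(\<Sum>i<n. (cmod (c i))^2) = (\<Sum>i<n. (if i = j then 1 else 0) + (if i = k then 1 else (0::real)))"
      using \<open>j \<noteq> k\<close> by (intro sum.cong) (auto simp: c_def)
    also have "\<dots> = 2"
      using \<open>j < n\<close> \<open>k < n\<close> by (simp add: sum.distrib)
    moreover have "(\<Sum>i<n. c i * e i \<xi>) = e j \<xi> - e k \<xi>" for \<xi>
    proof -
      have "(\<Sum>i<n. c i * e i \<xi>) = (\<Sum>i<n. (if i = j then e j \<xi> else 0) - (if i = k then e k \<xi> else 0))"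
        by (intro sum.cong) (auto simp: c_def)
      then show ?thesis
        using \<open>j < n\<close> \<open>k < n\<close> by (simp add: sum_subtractf)
    qed
    ultimately have "2 * A \<le> L2_norm2_on S (\<lambda>\<xi>. e j \<xi> - e k \<xi>)"
      using riesz_lower[of c n] by (simp add: mult.commute)
    also have "\<dots> \<le> measure lborel S * (D * d)^2"
    proof (rule L2_norm2_on_le_measure[OF assms(1)])
      show "continuous_on S (\<lambda>\<xi>. e j \<xi> - e k \<xi>)"
        unfolding e_def by (intro continuous_intros)
      fix \<xi> assume "\<xi> \<in> S"
      have "cmod (e j \<xi> - e k \<xi>) \<le> \<bar>\<xi> \<bullet> (xs j - xs k)\<bar>"
        using norm_exp_ii_diff_le[of "\<xi> \<bullet> xs j" "\<xi> \<bullet> xs k"] by (simp add: e_def inner_diff_right)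
      also have "\<dots> \<le> D * d"
        using Cauchy_Schwarz_ineq2[of \<xi> "xs j - xs k"] D[OF \<open>\<xi> \<in> S\<close>]
        by (simp add: d_def dist_norm mult_right_mono order_trans)
      finally show "(cmod (e j \<xi> - e k \<xi>))^2 \<le> (D * d)^2"
        by (intro power_mono) auto
    qed
    also have "\<dots> \<le> (K + 1) * d^2"
      by (simp add: K_def power_mult_distrib mult_right_mono algebra_simps)
    finally have "2 * A / (K + 1) \<le> d^2"
      using \<open>K \<ge> 0\<close> by (simp add: field_simps)
    then show ?thesis
      unfolding \<eta>_def d_def by (simp add: real_le_lsqrt)
  qed
  moreover have "\<eta> > 0"
    using \<open>A > 0\<close> \<open>K \<ge> 0\<close> by (simp add: \<eta>_def)
  ultimately show ?thesis
    by blast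
qed

theorem proposition2:
  fixes \<alpha> \<delta> :: real and xs :: "nat \<Rightarrow> real^2" and f :: "real^2 \<Rightarrow> complex"
    and a :: "nat \<Rightarrow> complex"
  assumes "\<alpha> > 0" and "\<delta> > 0"
    and "complete_interpolating (square \<delta>) xs"
    and "f \<in> PW (square \<delta>)" and "continuous_on UNIV f"
    and "summable (\<lambda>j. (cmod (a j))^2)"
    and "\<forall>k. poisson_sum \<alpha> xs a (xs k) = f (xs k)"
  shows "sq_int (poisson_sum \<alpha> xs a) \<and> continuous_on UNIV (poisson_sum \<alpha> xs a)"
proof -
  define g where "g j = (\<lambda>x. poisson \<alpha> (x - xs j))" for j
  obtain \<eta> where "\<eta> > 0" and "\<And>i j. i \<noteq> j \<Longrightarrow> \<eta> \<le> dist (xs i) (xs j)"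
    using complete_interpolating_separated[OF _ assms(3)] by (auto simp: square_def)
  then obtain M where g_sum: "\<And>n x. (\<Sum>j<n. g j x) \<le> M"
    using sum_poisson_translates_bounded[OF assms(1)] unfolding g_def by blast
  have g_cont: "continuous_on UNIV (g j)" for j
    unfolding g_def by (intro continuous_on_compose2[OF continuous_on_poisson[OF assms(1)]] continuous_intros) auto
  have g_nonneg: "0 \<le> g j x" for j x
    using poisson_pos[OF assms(1)] by (simp add: g_def less_imp_le)
  have g_int: "integrable lborel (g j)" and g_integral: "integral\<^sup>L lborel (g j) = integral\<^sup>L lborel (poisson \<alpha>)" for j
    using integrable_lborel_translate[OF integrable_poisson[OF assms(1)], of "- xs j"]
      integral_lborel_translate[OF integrable_poisson[OF assms(1)], of "- xs j"]
    by (simp_all add: g_def)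
  have "sq_int (\<lambda>x. \<Sum>j. a j * of_real (g j x))"
    by (rule sq_int_weighted_series[OF g_cont g_nonneg g_sum g_int eq_refl[OF g_integral] assms(6)])
  moreover have "continuous_on UNIV (\<lambda>x. \<Sum>j. a j * of_real (g j x))"
    by (rule continuous_on_weighted_series[OF g_cont g_nonneg g_sum assms(6)])
  ultimately show ?thesis
    unfolding poisson_sum_def g_def by blast
qed

end
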